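(* For every graph $G$ on $n\ge 1$ vertices, \[ \operatorname{rank}(A_G+I)\cdot \operatorname{rank}(A_{\overline{G}}+I)\ \ge\ n, \] with equality if and only if $G=K_n$ or $\overline{G}=K_n$.
   Context: All graphs are simple (undirected, no loops or multiple edges). $A_G$ denotes the $n\times n$ adjacency matrix of $G$, $\overline{G}$ the complement of $G$, $I=I_n$ the $n\times n$ identity matrix, and $\operatorname{rank}$ is the rank over $\mathbb{R}$. $K_n$ is the complete graph on $n$ vertices. *)

theory Defs
  imports "HOL-Analysis.Analysis"
begin

definition simple_graph :: "('n \<Rightarrow> 'n \<Rightarrow> bool) \<Rightarrow> bool" where
  "simple_graph E \<longleftrightarrow> (\<forall>i j. E i j \<longleftrightarrow> E j i) \<and> (\<forall>i. \<not> E i i)"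

definition adj_matrix :: "('n::finite \<Rightarrow> 'n \<Rightarrow> bool) \<Rightarrow> real^'n^'n" where
  "adj_matrix E = (\<chi> i j. if E i j then 1 else 0)"

definition complement_graph :: "('n \<Rightarrow> 'n \<Rightarrow> bool) \<Rightarrow> ('n \<Rightarrow> 'n \<Rightarrow> bool)" where
  "complement_graph E = (\<lambda>i j. i \<noteq> j \<and> \<not> E i j)"

definition complete_graph :: "'n \<Rightarrow> 'n \<Rightarrow> bool" where
  "complete_graph = (\<lambda>i j. i \<noteq> j)"

end

theory Submission
  imports Defs
begin

text \<open>Write r and s for the ranks of A + I and A' + I, where A and A' are the adjacency
  matrices of G and its complement. Their sum is J + I (J the all-ones matrix), which is
  nonsingular, so subadditivity of rank gives r + s \<ge> n. If G is complete, A + I = J and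
  A' + I = I, so r s = n, and symmetrically for the complement. Otherwise each of them has a
  non-adjacent pair, whose 2 \<times> 2 principal minor in A + I (resp. A' + I) is the identity, so
  r, s \<ge> 2; and one of them has an induced path x - y - z (a graph and its complement cannot
  both be disjoint unions of cliques unless one is complete), whose 3 \<times> 3 principal minor
  has determinant -1, so max r s \<ge> 3. Then r s > r + s \<ge> n.\<close>

lemma rank_add_le:
  fixes A B :: "real^'n^'m"
  shows "rank (A + B) \<le> rank A + rank B"
proof -
  let ?S = "range ((*v) A)" and ?T = "range ((*v) B)"
  have sub: "subspace ?S" "subspace ?T"
    by (simp_all add: linear_subspace_image subspace_UNIV)
  have "range ((*v) (A + B)) \<subseteq> {x + y |x y. x \<in> ?S \<and> y \<in> ?T}"
    by (auto simp: matrix_vector_mult_add_rdistrib)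
  then have "rank (A + B) \<le> dim {x + y |x y. x \<in> ?S \<and> y \<in> ?T}"
    by (simp add: rank_dim_range dim_subset)
  also have "\<dots> \<le> dim ?S + dim ?T"
    using dim_sums_Int [OF sub] by linarith
  finally show ?thesis
    by (simp add: rank_dim_range)
qed

lemma rank_submatrix_le:
  fixes A :: "real^'n^'m" and r :: "'p::finite \<Rightarrow> 'm" and c :: "'q::finite \<Rightarrow> 'n"
  shows "rank (\<chi> i j. A $ r i $ c j) \<le> rank A"
proof -
  define P :: "real^'m^'p" where "P = (\<chi> i k. of_bool (k = r i))"
  define Q :: "real^'q^'n" where "Q = (\<chi> k j. of_bool (k = c j))"
  have "(\<chi> i j. A $ r i $ c j) = P ** A ** Q"
    by (simp add: P_def Q_def matrix_matrix_mult_def vec_eq_iff)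
  then show ?thesis
    by (metis rank_mul_le_left rank_mul_le_right order_trans)
qed

lemma card_le_rank_if_det_submatrix_nonzero:
  fixes A :: "real^'n^'m" and r :: "'p::finite \<Rightarrow> 'm" and c :: "'p \<Rightarrow> 'n"
  assumes "det (\<chi> i j. A $ r i $ c j) \<noteq> 0"
  shows "CARD('p) \<le> rank A"
  using assms rank_submatrix_le [of A r c] by (simp add: det_eq_0_rank)

lemma rank_all_ones: "rank (\<chi> i j. 1 :: real^'n^'m) = 1"
proof -
  have "columns (\<chi> i j. 1 :: real^'n^'m) = {\<chi> i. 1}"
    by (auto simp: columns_def column_def)
  moreover have "(\<chi> i. 1 :: real^'m) \<noteq> 0"
    by (simp add: vec_eq_iff)
  ultimately show ?thesis
    by (simp add: column_rank_def)
qed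

lemma rank_all_ones_plus_id: "rank ((\<chi> i j. 1) + mat 1 :: real^'n^'n) = CARD('n)"
proof -
  have "x = 0" if "((\<chi> i j. 1) + mat 1) *v x = 0" for x :: "real^'n"
  proof -
    define S where "S = (\<Sum>j\<in>UNIV. x $ j)"
    have "((\<chi> i j. 1) + mat 1) *v x = (\<chi> i. S) + x"
      unfolding matrix_vector_mult_add_rdistrib matrix_vector_mul_lid
      by (simp add: matrix_vector_mult_def S_def vec_eq_iff)
    with that have "(\<chi> i. S) + x = 0"
      by simp
    then have x: "x $ i = - S" for i
      by (metis add_eq_0_iff vector_add_component vec_lambda_beta zero_index)
    have "S = (\<Sum>j\<in>UNIV. x $ j)"
      by (fact S_def)
    also have "\<dots> = - real CARD('n) * S"
      using x by simp
    finally have "(1 + real CARD('n)) * S = 0"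
      by (simp add: algebra_simps)
    then have "S = 0"
      by (simp add: add_pos_nonneg)
    then show "x = 0"
      using x by (simp add: vec_eq_iff)
  qed
  then show ?thesis
    using matrix_nonfull_linear_equations_eq by blast
qed

lemma simple_graph_complement: "simple_graph E \<Longrightarrow> simple_graph (complement_graph E)"
  by (auto simp: simple_graph_def complement_graph_def)

lemma complement_graph_involutive:
  "simple_graph E \<Longrightarrow> complement_graph (complement_graph E) = E"
  by (auto simp: simple_graph_def complement_graph_def fun_eq_iff)

lemma complement_complete_graph: "complement_graph complete_graph = (\<lambda>i j. False)"
  by (simp add: complement_graph_def complete_graph_def fun_eq_iff)

lemma adj_matrix_nth: "adj_matrix E $ i $ j = (if E i j then 1 else 0)"
  by (simp add: adj_matrix_def)

lemma adj_matrix_plus_id_add_complement: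
  assumes "simple_graph E"
  shows "(adj_matrix E + mat 1) + (adj_matrix (complement_graph E) + mat 1) = (\<chi> i j. 1) + mat 1"
  using assms
  by (auto simp: vec_eq_iff adj_matrix_nth mat_def complement_graph_def simple_graph_def)

lemma card_le_rank_adj_plus_id_add_complement:
  fixes E :: "'n::finite \<Rightarrow> 'n \<Rightarrow> bool"
  assumes "simple_graph E"
  shows "CARD('n) \<le> rank (adj_matrix E + mat 1) + rank (adj_matrix (complement_graph E) + mat 1)"
  using rank_add_le [of "adj_matrix E + mat 1" "adj_matrix (complement_graph E) + mat 1"]
  by (simp add: adj_matrix_plus_id_add_complement [OF assms] rank_all_ones_plus_id)

lemma rank_adj_complete_mult_rank_adj_complement:
  "rank (adj_matrix (complete_graph :: 'n::finite \<Rightarrow> 'n \<Rightarrow> bool) + mat 1)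
     * rank (adj_matrix (complement_graph (complete_graph :: 'n \<Rightarrow> 'n \<Rightarrow> bool)) + mat 1)
   = CARD('n)"
proof -
  have "adj_matrix (complete_graph :: 'n \<Rightarrow> 'n \<Rightarrow> bool) + mat 1 = (\<chi> i j. 1)"
    by (simp add: vec_eq_iff adj_matrix_nth mat_def complete_graph_def)
  moreover have "adj_matrix (complement_graph (complete_graph :: 'n \<Rightarrow> 'n \<Rightarrow> bool)) = 0"
    by (simp add: complement_complete_graph adj_matrix_def vec_eq_iff)
  ultimately show ?thesis
    by (simp add: rank_all_ones rank_I)
qed

lemma two_le_rank_adj_plus_id:
  assumes "simple_graph E" "E \<noteq> complete_graph"
  shows "2 \<le> rank (adj_matrix E + mat 1)"
proof -
  obtain x y where "x \<noteq> y" "\<not> E x y"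
    using assms by (auto simp: simple_graph_def complete_graph_def fun_eq_iff)
  let ?s = "\<lambda>i::2. if i = 1 then x else y"
  have "det (\<chi> i j. (adj_matrix E + mat 1) $ ?s i $ ?s j) = 1"
    using assms(1) \<open>x \<noteq> y\<close> \<open>\<not> E x y\<close>
    unfolding det_2 by (simp add: adj_matrix_nth mat_def simple_graph_def)
  then show ?thesis
    using card_le_rank_if_det_submatrix_nonzero [of "adj_matrix E + mat 1" ?s ?s] by simp
qed

definition has_induced_path3 :: "('n \<Rightarrow> 'n \<Rightarrow> bool) \<Rightarrow> bool" where
  "has_induced_path3 E \<longleftrightarrow> (\<exists>x y z. E x y \<and> E y z \<and> \<not> E x z \<and> x \<noteq> z)"

lemma three_le_rank_adj_plus_id:
  assumes "simple_graph E" "has_induced_path3 E"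
  shows "3 \<le> rank (adj_matrix E + mat 1)"
proof -
  obtain x y z where xyz: "E x y" "E y z" "\<not> E x z" "x \<noteq> z"
    using assms(2) by (auto simp: has_induced_path3_def)
  then have "x \<noteq> y" "y \<noteq> z"
    using assms(1) by (auto simp: simple_graph_def)
  let ?s = "\<lambda>i::3. if i = 1 then x else if i = 2 then y else z"
  have "det (\<chi> i j. (adj_matrix E + mat 1) $ ?s i $ ?s j) = -1"
    using assms(1) xyz \<open>x \<noteq> y\<close> \<open>y \<noteq> z\<close>
    by (simp add: det_3 adj_matrix_nth mat_def simple_graph_def)
  then show ?thesis
    using card_le_rank_if_det_submatrix_nonzero [of "adj_matrix E + mat 1" ?s ?s] by simp
qed

lemma has_induced_path3_or_complement:
  assumes "simple_graph E" "E \<noteq> complete_graph" "complement_graph E \<noteq> complete_graph"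
  shows "has_induced_path3 E \<or> has_induced_path3 (complement_graph E)"
proof (rule ccontr)
  assume no_path3: "\<not> ?thesis"
  then have trans: "E x z" if "E x y" "E y z" "x \<noteq> z" for x y z
    using that by (auto simp: has_induced_path3_def)
  have sym: "E i j \<longleftrightarrow> E j i" and irrefl: "\<not> E i i" for i j
    using assms(1) by (auto simp: simple_graph_def)
  obtain a b where ab: "E a b"
    using assms(3) irrefl by (auto simp: complement_graph_def complete_graph_def fun_eq_iff)
  obtain u w where uw: "u \<noteq> w" "\<not> E u w"
    using assms(2) irrefl by (auto simp: complete_graph_def fun_eq_iff)
  \<comment> \<open>In either case the complement contains the induced path a - w - b, resp. a - u - b.\<close>
  show False
  proof (cases "a = u \<or> E a u")
    case True
    then have "\<not> E a w" "\<not> E b w" "a \<noteq> w"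
      using ab uw trans sym by metis+
    then have "has_induced_path3 (complement_graph E)"
      using ab irrefl sym unfolding has_induced_path3_def complement_graph_def by metis
    with no_path3 show False
      by simp
  next
    case False
    then have "\<not> E b u"
      using ab trans sym by metis
    then have "has_induced_path3 (complement_graph E)"
      using ab False irrefl sym unfolding has_induced_path3_def complement_graph_def by metis
    with no_path3 show False
      by simp
  qed
qed

lemma nat_add_less_mult:
  fixes r s :: nat
  assumes "2 \<le> r" "2 \<le> s" "3 \<le> r \<or> 3 \<le> s"
  shows "r + s < r * s"
proof -
  obtain a b where "r = a + 2" "s = b + 2"
    using assms(1,2) by (metis le_add_diff_inverse2)
  then show ?thesis
    using assms(3) by (auto simp: algebra_simps)
qed

lemma card_less_rank_mult_rank_complement:
  fixes E :: "'n::finite \<Rightarrow> 'n \<Rightarrow> bool"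
  assumes "simple_graph E" "E \<noteq> complete_graph" "complement_graph E \<noteq> complete_graph"
  shows "CARD('n) < rank (adj_matrix E + mat 1) * rank (adj_matrix (complement_graph E) + mat 1)"
proof -
  have E': "simple_graph (complement_graph E)"
    using assms(1) by (rule simple_graph_complement)
  have "rank (adj_matrix E + mat 1) + rank (adj_matrix (complement_graph E) + mat 1)
      < rank (adj_matrix E + mat 1) * rank (adj_matrix (complement_graph E) + mat 1)"
    using nat_add_less_mult two_le_rank_adj_plus_id [OF assms(1,2)]
      two_le_rank_adj_plus_id [OF E' assms(3)] three_le_rank_adj_plus_id [OF assms(1)]
      three_le_rank_adj_plus_id [OF E'] has_induced_path3_or_complement [OF assms]
    by blast
  with card_le_rank_adj_plus_id_add_complement [OF assms(1)] show ?thesis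
    by linarith
qed

theorem theorem2p1:
  fixes E :: "'n::finite \<Rightarrow> 'n \<Rightarrow> bool"
  assumes "simple_graph E"
  shows "rank (adj_matrix E + mat 1) * rank (adj_matrix (complement_graph E) + mat 1) \<ge> CARD('n)
    \<and> (rank (adj_matrix E + mat 1) * rank (adj_matrix (complement_graph E) + mat 1) = CARD('n)
         \<longleftrightarrow> (E = complete_graph \<or> complement_graph E = complete_graph))"
proof -
  consider (complete) "E = complete_graph" | (empty) "complement_graph E = complete_graph"
    | (neither) "E \<noteq> complete_graph" "complement_graph E \<noteq> complete_graph"
    by blast
  then show ?thesis
  proof cases
    case complete
    then show ?thesis
      using rank_adj_complete_mult_rank_adj_complement [where 'n = 'n] by simp
  next
    case empty
    then have "E = complement_graph complete_graph"
      using complement_graph_involutive [OF assms] by metis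
    with empty show ?thesis
      using rank_adj_complete_mult_rank_adj_complement [where 'n = 'n] by (simp add: mult.commute)
  next
    case neither
    then show ?thesis
      using card_less_rank_mult_rank_complement [OF assms] by simp
  qed
qed

end
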